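(* Let $m_d>0$ and let $\gamma_d$ be generalized-$K$ distributed with parameters $k_d=m_d$ and mean $\overline\gamma_d>0$, i.e. with CDF $F_{\gamma_d}(x)=\frac{1}{\Gamma(m_d)^2}G_{1,3}^{2,1}\!\left(\frac{m_d^2x}{\overline\gamma_d}\,\middle|\,{1\atop m_d,m_d,0}\right)$. Then for every fixed $x>0$, as $\overline\gamma_d\to\infty$, $$F_{\gamma_d}(x)=\frac{\psi(m_d+1)+2\psi(1)-\psi(m_d)-\ln\!\left(\frac{m_d^2x}{\overline\gamma_d}\right)}{m_d^{-2m_d+1}\,\Gamma^2(m_d)\,x^{-m_d}\,\overline\gamma_d^{m_d}}+o(\overline\gamma_d^{-m_d}).$$
   Context: $\psi$ is the digamma function, $\Gamma$ the Gamma function, and $G^{m,n}_{p,q}$ the standard Meijer G-function. The generalized-$K$ distribution with parameters $k,m$ and mean $\overline\gamma$ is that of $\overline\gamma XY$ with $X,Y$ independent unit-mean Gamma variables of shapes $k$ and $m$. *)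

theory Defs
  imports "HOL-Probability.Probability" "HOL-Library.Landau_Symbols"
begin

definition gamma_unit_density :: "real \<Rightarrow> real \<Rightarrow> real" where
  "gamma_unit_density m t =
     (if t > 0 then m powr m * t powr (m - 1) * exp (- m * t) / Gamma m else 0)"

definition gamma_pair_measure :: "real \<Rightarrow> real \<Rightarrow> (real \<times> real) measure" where
  "gamma_pair_measure k m =
     density (lborel \<Otimes>\<^sub>M lborel)
       (\<lambda>(s, t). ennreal (gamma_unit_density k s * gamma_unit_density m t))"

text \<open>CDF of the generalized-K distribution with parameters k, m and mean gbar,
  i.e. of gbar * X * Y.\<close>
definition genK_cdf :: "real \<Rightarrow> real \<Rightarrow> real \<Rightarrow> real \<Rightarrow> real" where
  "genK_cdf k m gbar x =
     measure (gamma_pair_measure k m) {(s, t). gbar * s * t \<le> x}"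

end

theory Submission
  imports Defs "HOL-Real_Asymp.Real_Asymp"
begin

text \<open>
  Substituting \<open>s = u/m\<close>, \<open>t = w/(m u)\<close> in the joint density of \<open>(X, Y)\<close> gives
  \<open>F(x) = \<Gamma>(m)\<^sup>-\<^sup>2 \<integral>\<^sub>0\<^sup>z w\<^sup>m\<^sup>-\<^sup>1 K(w) dw\<close> with \<open>z = m\<^sup>2 x / g\<close> and
  \<open>K(w) = \<integral>\<^sub>0\<^sup>\<infinity> e\<^sup>-\<^sup>u\<^sup>-\<^sup>w\<^sup>/\<^sup>u du/u\<close>.
  As \<open>w \<rightarrow> 0\<^sup>+\<close>, \<open>K(w) = 2\<psi>(1) - ln w + o(1)\<close>: splitting \<open>e\<^sup>-\<^sup>u/u\<close> at \<open>u = 1\<close> leaves a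
  kernel whose integral is \<open>\<psi>(1) = lim (\<Gamma>(h) - 1/h)\<close>, plus the exponential integral
  \<open>E\<^sub>1(w) = \<psi>(1) - ln w + o(1)\<close>. Integrating \<open>w\<^sup>m\<^sup>-\<^sup>1 (2\<psi>(1) - ln w)\<close> exactly gives the
  leading term, and the \<open>o(1)\<close> error contributes only \<open>o(z\<^sup>m) = o(g\<^sup>-\<^sup>m)\<close>.
\<close>

lemma Gamma_minus_inverse_tendsto_Digamma_1:
  "((\<lambda>h::real. Gamma h - 1 / h) \<longlongrightarrow> Digamma 1) (at_right 0)"
proof -
  have "(Gamma has_field_derivative Gamma 1 * Digamma 1) (at (1::real))"
    by (rule has_field_derivative_Gamma) (auto simp: nonpos_Ints_def)
  hence "((\<lambda>h. (Gamma (1 + h) - Gamma 1) / h) \<longlongrightarrow> Digamma (1::real)) (at 0)"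
    by (simp add: DERIV_def)
  hence "((\<lambda>h. (Gamma (1 + h) - Gamma 1) / h) \<longlongrightarrow> Digamma (1::real)) (at_right 0)"
    by (auto intro: tendsto_mono at_le)
  moreover have "eventually (\<lambda>h. (Gamma (1 + h) - Gamma 1) / h = Gamma h - 1 / h) (at_right (0::real))"
  proof (rule eventually_at_rightI[of 0 1])
    fix h :: real assume "h \<in> {0<..<1}"
    hence "0 < h" "h \<notin> \<int>\<^sub>\<le>\<^sub>0" by (auto elim!: nonpos_Ints_cases)
    thus "(Gamma (1 + h) - Gamma 1) / h = Gamma h - 1 / h"
      using Gamma_plus1[of h] by (simp add: add.commute field_simps)
  qed simp
  ultimately show ?thesis by (rule Lim_transform_eventually)
qed

lemma has_integral_Ici_imp_Ioi:
  fixes f :: "real \<Rightarrow> real"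
  assumes "(f has_integral I) {a..}"
  shows "(f has_integral I) {a<..}"
proof -
  have "((\<lambda>x. if x \<in> {a<..} then f x else 0) has_integral I) {a..}"
    by (rule has_integral_spike_finite[of "{a}", rotated 2, OF assms]) auto
  thus ?thesis by (subst has_integral_restrict[symmetric]) auto
qed

lemma has_integral_exp_1_minus: "((\<lambda>u::real. exp (1 - u)) has_integral exp 1) {0..}"
proof -
  have "((\<lambda>u::real. exp 1 * exp (- 1 * u)) has_integral exp 1 * (exp (- 1 * 0) / 1)) {0..}"
    by (intro has_integral_mult_right has_integral_exp_minus_to_infinity) auto
  thus ?thesis by (simp add: exp_diff exp_minus field_simps)
qed

definition euler_kernel :: "real \<Rightarrow> real" where
  "euler_kernel u = (exp (- u) - (if u \<le> 1 then 1 else 0)) / u"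

lemma abs_euler_kernel_le_1:
  assumes "0 \<le> u" "u \<le> 1"
  shows "\<bar>euler_kernel u\<bar> \<le> 1"
proof (cases "u = 0")
  case False
  have "1 - u \<le> exp (- u)" using exp_ge_add_one_self[of "- u"] by simp
  moreover have "exp (- u) \<le> 1" using assms by simp
  ultimately show ?thesis
    using assms False by (simp add: euler_kernel_def divide_le_eq abs_le_iff)
qed (simp add: euler_kernel_def)

lemma abs_powr_mult_euler_kernel_le:
  assumes "0 \<le> u" "0 \<le> h" "h \<le> 1"
  shows "\<bar>u powr h * euler_kernel u\<bar> \<le> exp (1 - u)"
proof (cases "u \<le> 1")
  case True
  have "\<bar>u powr h * euler_kernel u\<bar> = u powr h * \<bar>euler_kernel u\<bar>" by (simp add: abs_mult)
  also have "\<dots> \<le> 1 powr h * 1"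
    using assms True abs_euler_kernel_le_1 by (intro mult_mono powr_mono2) auto
  also have "\<dots> \<le> exp (1 - u)" using True by simp
  finally show ?thesis .
next
  case False
  have "\<bar>u powr h * euler_kernel u\<bar> = u powr h * (exp (- u) / u)"
    using False by (simp add: euler_kernel_def abs_mult)
  also have "\<dots> \<le> u powr 1 * (exp (- u) / u)"
    using assms False by (intro mult_right_mono powr_mono) auto
  also have "\<dots> \<le> exp (1 - u)" using False by simp
  finally show ?thesis .
qed

lemma abs_euler_kernel_le:
  assumes "0 \<le> u"
  shows "\<bar>euler_kernel u\<bar> \<le> exp (1 - u)"
  using abs_powr_mult_euler_kernel_le[OF assms, of 0] by (cases "u = 0") (auto simp: euler_kernel_def)

lemma has_integral_powr_mult_euler_kernel:
  assumes "0 < h"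
  shows "((\<lambda>u. u powr h * euler_kernel u) has_integral Gamma h - 1 / h) {0..}"
proof -
  have "((\<lambda>t. t powr (h - 1) / exp t) has_integral Gamma h) {0..}"
    using Gamma_integral_real assms by simp
  moreover have "((\<lambda>t. t powr (h - 1)) has_integral 1 powr (h - 1 + 1) / (h - 1 + 1)) {0..1}"
    using assms by (intro has_integral_powr_from_0) auto
  hence "((\<lambda>t. if t \<in> {0..1} then t powr (h - 1) else 0) has_integral 1 / h) {0..}"
    by (subst has_integral_restrict) auto
  ultimately have "((\<lambda>t. t powr (h - 1) / exp t - (if t \<in> {0..1} then t powr (h - 1) else 0))
      has_integral Gamma h - 1 / h) {0..}"
    by (rule has_integral_diff)
  thus ?thesis
  proof (rule has_integral_spike_finite[of "{0}", rotated 2], simp)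
    fix u :: real assume "u \<in> {0..} - {0}"
    hence "u > 0" by simp
    thus "u powr h * euler_kernel u
        = u powr (h - 1) / exp u - (if u \<in> {0..1} then u powr (h - 1) else 0)"
      by (auto simp: powr_diff euler_kernel_def field_simps exp_minus)
  qed
qed

lemma has_integral_euler_kernel: "(euler_kernel has_integral Digamma 1) {0..}"
proof -
  define h where "h = (\<lambda>k::nat. inverse (real (Suc k)))"
  have h_bounds: "0 < h k" "h k \<le> 1" for k by (auto simp: h_def field_simps)
  have h_lim: "h \<longlonglongrightarrow> 0" unfolding h_def by (rule LIMSEQ_inverse_real_of_nat)
  have "filterlim h (at_right 0) sequentially"
    by (rule tendsto_imp_filterlim_at_right[OF h_lim]) (auto simp: h_bounds)
  hence "(\<lambda>k. Gamma (h k) - 1 / h k) \<longlonglongrightarrow> Digamma 1"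
    by (rule filterlim_compose[OF Gamma_minus_inverse_tendsto_Digamma_1])
  thus ?thesis
  proof (rule has_integral_dominated_convergence[rotated 4])
    show "((\<lambda>u. u powr h k * euler_kernel u) has_integral Gamma (h k) - 1 / h k) {0..}" for k
      using h_bounds by (intro has_integral_powr_mult_euler_kernel)
    show "(\<lambda>u::real. exp (1 - u)) integrable_on {0..}"
      using has_integral_exp_1_minus by (rule has_integral_integrable)
    show "\<forall>u\<in>{0..}. norm (u powr h k * euler_kernel u) \<le> exp (1 - u)" for k
      using abs_powr_mult_euler_kernel_le h_bounds(2) less_imp_le[OF h_bounds(1)] by auto
    show "\<forall>u\<in>{0..}. (\<lambda>k. u powr h k * euler_kernel u) \<longlonglongrightarrow> euler_kernel u"
    proof
      fix u :: real assume "u \<in> {0..}"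
      show "(\<lambda>k. u powr h k * euler_kernel u) \<longlonglongrightarrow> euler_kernel u"
      proof (cases "u = 0")
        case False
        hence "(\<lambda>k. u powr h k * euler_kernel u) \<longlonglongrightarrow> u powr 0 * euler_kernel u"
          by (intro tendsto_intros h_lim) auto
        thus ?thesis using False by simp
      qed (simp add: euler_kernel_def)
    qed
  qed
qed

lemma euler_kernel_absolutely_integrable: "euler_kernel absolutely_integrable_on {0..}"
proof (rule absolutely_integrable_integrable_bound)
  show "euler_kernel integrable_on {0..}" using has_integral_euler_kernel by blast
  show "(\<lambda>u::real. exp (1 - u)) integrable_on {0..}" using has_integral_exp_1_minus by blast
qed (use abs_euler_kernel_le in auto)

lemma euler_kernel_integrable_on_subset:
  assumes "S \<in> sets lebesgue" "S \<subseteq> {0..}"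
  shows "euler_kernel integrable_on S"
  using set_integrable_subset[OF euler_kernel_absolutely_integrable assms]
    set_lebesgue_integral_eq_integral(1) by blast

definition damped_euler_integral :: "real \<Rightarrow> real" where
  "damped_euler_integral w = integral {0<..} (\<lambda>u. exp (- w / u) * euler_kernel u)"

lemma damped_euler_integrand_absolutely_integrable:
  assumes "0 \<le> w"
  shows "(\<lambda>u. exp (- w / u) * euler_kernel u) absolutely_integrable_on {0<..}"
proof (rule absolutely_integrable_bounded_measurable_product_real)
  show "(\<lambda>u. exp (- w / u)) \<in> borel_measurable (lebesgue_on {0<..})"
    by (intro continuous_imp_measurable_on_sets_lebesgue continuous_intros) auto
  show "bounded ((\<lambda>u. exp (- w / u)) ` {0<..})"
    unfolding bounded_iff using assms by (intro exI[of _ 1]) auto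
  show "euler_kernel absolutely_integrable_on {0<..}"
    by (rule set_integrable_subset[OF euler_kernel_absolutely_integrable]) auto
qed simp

lemma tendsto_damped_euler_integral:
  "(damped_euler_integral \<longlongrightarrow> Digamma 1) (at_right 0)"
proof (rule tendsto_at_right_sequentially[of 0 1])
  fix w :: "nat \<Rightarrow> real" assume w: "\<And>n. 0 < w n" "w \<longlonglongrightarrow> 0"
  have "(\<lambda>k. integral {0<..} (\<lambda>u. exp (- w k / u) * euler_kernel u))
          \<longlonglongrightarrow> integral {0<..} euler_kernel"
  proof (rule dominated_convergence(2))
    show "(\<lambda>u. exp (- w k / u) * euler_kernel u) integrable_on {0<..}" for k
      using damped_euler_integrand_absolutely_integrable[of "w k"] w(1)[of k]
      by (simp add: set_lebesgue_integral_eq_integral(1))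
    show "(\<lambda>u::real. exp (1 - u)) integrable_on {0<..}"
      using has_integral_Ici_imp_Ioi[OF has_integral_exp_1_minus] by blast
    show "norm (exp (- w k / u) * euler_kernel u) \<le> exp (1 - u)" if "u \<in> {0<..}" for k u
    proof -
      have "norm (exp (- w k / u) * euler_kernel u) = exp (- w k / u) * \<bar>euler_kernel u\<bar>"
        by (simp add: abs_mult)
      also have "\<dots> \<le> 1 * exp (1 - u)"
        using that w(1)[of k] abs_euler_kernel_le[of u] by (intro mult_mono) auto
      finally show ?thesis by simp
    qed
    show "(\<lambda>k. exp (- w k / u) * euler_kernel u) \<longlonglongrightarrow> euler_kernel u"
      if "u \<in> {0<..}" for u
    proof -
      have "(\<lambda>k. exp (- w k / u) * euler_kernel u) \<longlonglongrightarrow> exp (- 0 / u) * euler_kernel u"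
        using that by (intro tendsto_intros w(2)) auto
      thus ?thesis by simp
    qed
  qed
  moreover have "integral {0<..} euler_kernel = Digamma 1"
    using has_integral_Ici_imp_Ioi[OF has_integral_euler_kernel] by (rule integral_unique)
  ultimately show "(\<lambda>n. damped_euler_integral (w n)) \<longlonglongrightarrow> Digamma 1"
    by (simp add: damped_euler_integral_def)
qed simp

definition euler_kernel_primitive :: "real \<Rightarrow> real" where
  "euler_kernel_primitive w = integral {0..w} euler_kernel"

lemma has_integral_euler_kernel_primitive:
  assumes "0 \<le> w"
  shows "(euler_kernel has_integral euler_kernel_primitive w) {0..w}"
  unfolding euler_kernel_primitive_def using assms euler_kernel_integrable_on_subset[of "{0..w}"]
  by (auto intro: integrable_integral)

lemma abs_euler_kernel_primitive_le:
  assumes "0 \<le> w" "w \<le> 1"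
  shows "\<bar>euler_kernel_primitive w\<bar> \<le> w"
proof -
  have "norm (euler_kernel_primitive w) \<le> 1 * measure lborel (cbox 0 w)"
    using has_integral_euler_kernel_primitive[OF assms(1)]
    by (intro has_integral_bound[OF zero_le_one])
       (use abs_euler_kernel_le_1 assms in \<open>auto simp: cbox_interval\<close>)
  thus ?thesis using assms by (simp add: cbox_interval)
qed

lemma tendsto_euler_kernel_primitive: "(euler_kernel_primitive \<longlongrightarrow> 0) (at_right 0)"
proof (rule tendsto_sandwich[of "\<lambda>w. - w" _ _ "\<lambda>w. w"])
  have "eventually (\<lambda>w. \<bar>euler_kernel_primitive w\<bar> \<le> w) (at_right 0)"
    using abs_euler_kernel_primitive_le by (intro eventually_at_rightI[of 0 1]) auto
  thus "eventually (\<lambda>w. - w \<le> euler_kernel_primitive w) (at_right 0)"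
    "eventually (\<lambda>w. euler_kernel_primitive w \<le> w) (at_right 0)"
    by (auto elim!: eventually_mono)
qed (auto intro!: tendsto_eq_intros simp: tendsto_ident_at)

lemma has_integral_exp_minus_divide:
  assumes "0 < w" "w \<le> 1"
  shows "((\<lambda>s. exp (- s) / s) has_integral Digamma 1 - euler_kernel_primitive w - ln w) {w..}"
proof -
  have tail: "(euler_kernel has_integral integral {w..} euler_kernel) {w..}"
    using euler_kernel_integrable_on_subset[of "{w..}"] assms by (auto intro: integrable_integral)
  have "(euler_kernel has_integral euler_kernel_primitive w + integral {w..} euler_kernel)
      ({0..w} \<union> {w..})"
    using assms by (intro has_integral_Un has_integral_euler_kernel_primitive tail)
      (auto intro: negligible_subset[of "{w}"])
  moreover have "{0..w} \<union> {w..} = {0::real..}" using assms by auto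
  ultimately have tail_eq: "integral {w..} euler_kernel = Digamma 1 - euler_kernel_primitive w"
    using has_integral_unique[OF _ has_integral_euler_kernel] by fastforce
  have "((\<lambda>s. 1 / s) has_integral ln 1 - ln w) {w..1}"
    using assms by (intro fundamental_theorem_of_calculus)
      (auto intro!: derivative_eq_intros simp: has_real_derivative_iff_has_vector_derivative[symmetric])
  hence "((\<lambda>s. if s \<in> {w..1} then 1 / s else 0) has_integral - ln w) {w..}"
    by (subst has_integral_restrict) auto
  from has_integral_add[OF tail this]
  have "((\<lambda>s. euler_kernel s + (if s \<in> {w..1} then 1 / s else 0))
      has_integral Digamma 1 - euler_kernel_primitive w - ln w) {w..}"
    by (simp add: tail_eq)
  thus ?thesis
    by (rule has_integral_spike_finite[of "{}", rotated 2])
       (use assms in \<open>auto simp: euler_kernel_def diff_divide_distrib\<close>)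
qed

lemma has_integral_exp_divide_reciprocal:
  fixes w :: real
  assumes w: "0 < w"
  shows "((\<lambda>u. exp (- w / u) / u) has_integral integral {w..} (\<lambda>s. exp (- s) / s)) {0<..1}"
proof -
  have image: "(\<lambda>s. w / s) ` {w..} = {0<..1}"
  proof
    show "{0<..1} \<subseteq> (\<lambda>s. w / s) ` {w..}"
    proof
      fix u :: real assume u: "u \<in> {0<..1}"
      hence "u = w / (w / u)" "w / u \<in> {w..}" using w by (auto simp: field_simps)
      thus "u \<in> (\<lambda>s. w / s) ` {w..}" by blast
    qed
  qed (use w in \<open>auto simp: divide_le_eq\<close>)
  have jacobian: "\<bar>- w / s\<^sup>2\<bar> * (exp (- w / (w / s)) / (w / s)) = exp (- s) / s" if "s \<in> {w..}" for s
    using that w by (auto simp: power2_eq_square field_simps)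
  have "(\<lambda>s. exp (- s) / s) absolutely_integrable_on {w..}"
  proof (rule measurable_bounded_by_integrable_imp_absolutely_integrable)
    show "(\<lambda>s. exp (- s) / s) \<in> borel_measurable (lebesgue_on {w..})"
      using w by (intro continuous_imp_measurable_on_sets_lebesgue continuous_intros) auto
    have "((\<lambda>s. exp (- 1 * s) * (1 / w)) has_integral exp (- 1 * w) / 1 * (1 / w)) {w..}"
      by (intro has_integral_mult_left has_integral_exp_minus_to_infinity) auto
    thus "(\<lambda>s. exp (- s) / w) integrable_on {w..}" by (auto simp: integrable_on_def)
    show "norm (exp (- s) / s) \<le> exp (- s) / w" if "s \<in> {w..}" for s
      using that w by (auto intro!: divide_left_mono)
  qed simp
  hence "(\<lambda>s. \<bar>- w / s\<^sup>2\<bar> * (exp (- w / (w / s)) / (w / s))) absolutely_integrable_on {w..}"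
    by (subst set_integrable_cong[OF refl refl jacobian])
  moreover have "integral {w..} (\<lambda>s. \<bar>- w / s\<^sup>2\<bar> * (exp (- w / (w / s)) / (w / s)))
      = integral {w..} (\<lambda>s. exp (- s) / s)"
    by (rule integral_cong) (rule jacobian)
  ultimately have "(\<lambda>u. exp (- w / u) / u) absolutely_integrable_on (\<lambda>s. w / s) ` {w..} \<and>
      integral ((\<lambda>s. w / s) ` {w..}) (\<lambda>u. exp (- w / u) / u) = integral {w..} (\<lambda>s. exp (- s) / s)"
  proof (subst has_absolute_integral_change_of_variables_1'[symmetric, where g' = "\<lambda>s. - w / s\<^sup>2"])
    show "((\<lambda>s. w / s) has_field_derivative - w / s\<^sup>2) (at s within {w..})" if "s \<in> {w..}" for s
      using that w by (auto intro!: derivative_eq_intros simp: power2_eq_square)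
  qed (use w in \<open>auto simp: inj_on_def\<close>)
  thus ?thesis unfolding image
    by (metis has_integral_integrable_integral set_lebesgue_integral_eq_integral(1))
qed

text \<open>\<open>bessel_kernel w = 2 K\<^sub>0(2 \<surd>w)\<close>, with \<open>K\<^sub>0\<close> the modified Bessel function of the
  second kind.\<close>
definition bessel_kernel :: "real \<Rightarrow> real" where
  "bessel_kernel w = integral {0<..} (\<lambda>u. exp (- u - w / u) / u)"

lemma has_integral_bessel_kernel_integrand:
  assumes "0 < w" "w \<le> 1"
  shows "((\<lambda>u. exp (- u - w / u) / u) has_integral
      damped_euler_integral w + Digamma 1 - euler_kernel_primitive w - ln w) {0<..}"
proof -
  have "((\<lambda>u. exp (- w / u) * euler_kernel u) has_integral damped_euler_integral w) {0<..}"
    using damped_euler_integrand_absolutely_integrable[of w] assms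
      set_lebesgue_integral_eq_integral(1)
    by (auto simp: damped_euler_integral_def intro: integrable_integral)
  moreover have "((\<lambda>u. if u \<in> {0<..1} then exp (- w / u) / u else 0) has_integral
      Digamma 1 - euler_kernel_primitive w - ln w) {0<..}"
    using has_integral_exp_divide_reciprocal[of w] integral_unique[OF has_integral_exp_minus_divide]
      assms by (subst has_integral_restrict) auto
  ultimately have "((\<lambda>u. exp (- w / u) * euler_kernel u + (if u \<in> {0<..1} then exp (- w / u) / u else 0))
      has_integral damped_euler_integral w + (Digamma 1 - euler_kernel_primitive w - ln w)) {0<..}"
    by (rule has_integral_add)
  thus ?thesis unfolding add_diff_eq[symmetric]
  proof (rule has_integral_spike_finite[of "{}", rotated 2], simp)
    fix u :: real assume "u \<in> {0<..} - {}"
    moreover have "exp (- u - w / u) = exp (- w / u) * exp (- u)"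
      by (simp add: exp_add[symmetric])
    ultimately show "exp (- u - w / u) / u
        = exp (- w / u) * euler_kernel u + (if u \<in> {0<..1} then exp (- w / u) / u else 0)"
      by (auto simp: euler_kernel_def field_simps)
  qed
qed

lemma bessel_kernel_eq:
  assumes "0 < w" "w \<le> 1"
  shows "bessel_kernel w = damped_euler_integral w + Digamma 1 - euler_kernel_primitive w - ln w"
  unfolding bessel_kernel_def using has_integral_bessel_kernel_integrand[OF assms]
  by (rule integral_unique)

lemma nn_integral_bessel_kernel:
  assumes "0 < w" "w \<le> 1"
  shows "(\<integral>\<^sup>+ u. ennreal (indicator {0<..} u * (exp (- u - w / u) / u)) \<partial>lborel)
      = ennreal (bessel_kernel w)"
  using has_integral_bessel_kernel_integrand[OF assms] bessel_kernel_eq[OF assms]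
  by (intro nn_integral_has_integral_lebesgue) auto

lemma tendsto_bessel_kernel_plus_ln:
  "((\<lambda>w. bessel_kernel w + ln w) \<longlongrightarrow> 2 * Digamma 1) (at_right 0)"
proof -
  have "((\<lambda>w. damped_euler_integral w + Digamma 1 - euler_kernel_primitive w)
      \<longlongrightarrow> Digamma 1 + Digamma 1 - 0) (at_right 0)"
    by (intro tendsto_intros tendsto_damped_euler_integral tendsto_euler_kernel_primitive)
  moreover have "eventually (\<lambda>w. damped_euler_integral w + Digamma 1 - euler_kernel_primitive w
      = bessel_kernel w + ln w) (at_right 0)"
    by (rule eventually_at_rightI[of 0 1]) (auto simp: bessel_kernel_eq)
  ultimately show ?thesis by (simp add: Lim_transform_eventually)
qed

definition powr_ln_primitive :: "real \<Rightarrow> real \<Rightarrow> real \<Rightarrow> real" where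
  "powr_ln_primitive m D w = w powr m * (D - ln w) / m + w powr m / m\<^sup>2"

lemma powr_ln_primitive_shift:
  "powr_ln_primitive m (D + e) w = powr_ln_primitive m D w + e * w powr m / m"
  by (simp add: powr_ln_primitive_def algebra_simps add_divide_distrib diff_divide_distrib)

lemma powr_ln_primitive_nonneg:
  assumes "0 < m" "ln z \<le> D"
  shows "0 \<le> powr_ln_primitive m D z"
proof -
  have "0 \<le> z powr m * (D - ln z) / m" using assms by simp
  thus ?thesis by (simp add: powr_ln_primitive_def)
qed

lemma has_real_derivative_powr_ln_primitive:
  assumes "m \<noteq> 0" "0 < w"
  shows "(powr_ln_primitive m D has_real_derivative w powr (m - 1) * (D - ln w)) (at w)"
proof -
  have "w powr m / w = w powr (m - 1)" using assms by (simp add: powr_diff)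
  thus ?thesis
    unfolding powr_ln_primitive_def[abs_def] using assms
    by (auto intro!: derivative_eq_intros simp: field_simps power2_eq_square)
qed

lemma continuous_on_powr_ln_primitive:
  assumes "0 < m"
  shows "continuous_on {0..} (powr_ln_primitive m D)"
proof -
  have "((\<lambda>w. w powr m * (D - ln w) / m + w powr m / m\<^sup>2) \<longlongrightarrow> 0) (at_right 0)"
    using assms by real_asymp
  hence "(powr_ln_primitive m D \<longlongrightarrow> powr_ln_primitive m D 0) (at 0 within {0..})"
    by (simp add: powr_ln_primitive_def[abs_def] at_within_Ici_at_right)
  moreover have "isCont (powr_ln_primitive m D) w" if "0 < w" for w
    using has_real_derivative_powr_ln_primitive[of m w D] assms that
    by (auto intro: DERIV_isCont)
  ultimately show ?thesis
    unfolding continuous_on_def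
    by (metis atLeast_iff continuous_within isCont_def less_eq_real_def tendsto_within_subset subset_UNIV)
qed

lemma nn_integral_powr_mult_ln:
  assumes "0 < m" "0 < z" "ln z \<le> D"
  shows "(\<integral>\<^sup>+ w. ennreal (indicator {0<..z} w * w powr (m - 1) * (D - ln w)) \<partial>lborel)
      = ennreal (powr_ln_primitive m D z)"
proof -
  have nonneg: "0 \<le> w powr (m - 1) * (D - ln w)" if "0 \<le> w" "w \<le> z" for w
  proof (cases "w = 0")
    case False
    hence "ln w \<le> ln z" using that assms(2) by simp
    thus ?thesis using assms(3) by simp
  qed simp
  have "((\<lambda>w. w powr (m - 1) * (D - ln w)) has_integral
      powr_ln_primitive m D z - powr_ln_primitive m D 0) {0..z}"
  proof (rule fundamental_theorem_of_calculus_interior)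
    show "continuous_on {0..z} (powr_ln_primitive m D)"
      using continuous_on_powr_ln_primitive[OF assms(1)] by (rule continuous_on_subset) auto
    show "(powr_ln_primitive m D has_vector_derivative w powr (m - 1) * (D - ln w)) (at w)"
      if "w \<in> {0<..<z}" for w
      using has_real_derivative_powr_ln_primitive[of m w D] assms that
      by (simp add: has_real_derivative_iff_has_vector_derivative)
  qed (use assms in auto)
  hence "(\<integral>\<^sup>+ w. ennreal (indicator {0..z} w * (w powr (m - 1) * (D - ln w))) \<partial>lborel)
      = ennreal (powr_ln_primitive m D z)"
    using nonneg by (intro nn_integral_has_integral_lebesgue) (auto simp: powr_ln_primitive_def)
  moreover have "indicator {0<..z} w * w powr (m - 1) * (D - ln w)
      = indicator {0..z} w * (w powr (m - 1) * (D - ln w))" for w :: real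
    by (cases "w = 0") (auto simp: indicator_def)
  ultimately show ?thesis by (simp only:)
qed

lemma nn_integral_powr_mult_bounds:
  assumes "0 < m" "0 < z" "ln z \<le> D\<^sub>1"
    and between: "\<And>w. 0 < w \<Longrightarrow> w \<le> z \<Longrightarrow> D\<^sub>1 - ln w \<le> f w \<and> f w \<le> D\<^sub>2 - ln w"
  defines "I \<equiv> enn2real (\<integral>\<^sup>+ w. ennreal (indicator {0<..z} w * w powr (m - 1) * f w) \<partial>lborel)"
  shows "powr_ln_primitive m D\<^sub>1 z \<le> I" "I \<le> powr_ln_primitive m D\<^sub>2 z"
proof -
  have "ln z \<le> D\<^sub>2" using between[of z] assms(2,3) by auto
  have weighted: "indicator {0<..z} w * w powr (m - 1) * (D\<^sub>1 - ln w)
      \<le> indicator {0<..z} w * w powr (m - 1) * f w"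
    "indicator {0<..z} w * w powr (m - 1) * f w
      \<le> indicator {0<..z} w * w powr (m - 1) * (D\<^sub>2 - ln w)" for w
    using between[of w] by (auto simp: indicator_def intro!: mult_left_mono)
  have lower: "ennreal (powr_ln_primitive m D\<^sub>1 z)
      \<le> (\<integral>\<^sup>+ w. ennreal (indicator {0<..z} w * w powr (m - 1) * f w) \<partial>lborel)"
    unfolding nn_integral_powr_mult_ln[OF assms(1-3), symmetric]
    by (intro nn_integral_mono ennreal_leI weighted)
  have upper: "(\<integral>\<^sup>+ w. ennreal (indicator {0<..z} w * w powr (m - 1) * f w) \<partial>lborel)
      \<le> ennreal (powr_ln_primitive m D\<^sub>2 z)"
    unfolding nn_integral_powr_mult_ln[OF assms(1,2) \<open>ln z \<le> D\<^sub>2\<close>, symmetric]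
    by (intro nn_integral_mono ennreal_leI weighted)
  have "(\<integral>\<^sup>+ w. ennreal (indicator {0<..z} w * w powr (m - 1) * f w) \<partial>lborel) < \<infinity>"
    using upper by (simp add: le_less_trans)
  thus "powr_ln_primitive m D\<^sub>1 z \<le> I"
    unfolding I_def using enn2real_mono[OF lower] powr_ln_primitive_nonneg[OF assms(1,3)] by simp
  show "I \<le> powr_ln_primitive m D\<^sub>2 z"
    unfolding I_def using enn2real_mono[OF upper] powr_ln_primitive_nonneg[OF assms(1) \<open>ln z \<le> D\<^sub>2\<close>]
    by simp
qed

lemma nn_integral_powr_mult_asymptotic:
  assumes "0 < m" and f: "((\<lambda>w. f w + ln w) \<longlongrightarrow> L) (at_right 0)"
  shows "(\<lambda>z. enn2real (\<integral>\<^sup>+ w. ennreal (indicator {0<..z} w * w powr (m - 1) * f w) \<partial>lborel)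
      - powr_ln_primitive m L z) \<in> o[at_right 0](\<lambda>z. z powr m)"
proof (rule landau_o.smallI)
  fix c :: real assume "0 < c"
  define e where "e = c * m"
  have "0 < e" using \<open>0 < c\<close> assms(1) by (simp add: e_def)
  have "eventually (\<lambda>w. dist (f w + ln w) L < e) (at_right 0)"
    using tendstoD[OF f \<open>0 < e\<close>] .
  moreover have "filterlim (\<lambda>w::real. - ln w) at_top (at_right 0)"
    by (rule filterlim_compose[OF filterlim_uminus_at_top_at_bot ln_at_0])
  hence "eventually (\<lambda>w. e - L \<le> - ln w) (at_right 0)"
    unfolding filterlim_at_top by blast
  ultimately have "eventually (\<lambda>w. dist (f w + ln w) L < e \<and> e - L \<le> - ln w) (at_right 0)"
    by (rule eventually_conj)
  then obtain b where "0 < b" and near_0: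
    "\<And>w. 0 < w \<Longrightarrow> w < b \<Longrightarrow> dist (f w + ln w) L < e \<and> e - L \<le> - ln w"
    unfolding eventually_at_right_field by auto
  show "eventually (\<lambda>z. norm (enn2real (\<integral>\<^sup>+ w. ennreal (indicator {0<..z} w * w powr (m - 1) * f w) \<partial>lborel)
      - powr_ln_primitive m L z) \<le> c * norm (z powr m)) (at_right 0)"
  proof (rule eventually_at_rightI[OF _ \<open>0 < b\<close>])
    fix z assume z: "z \<in> {0<..<b}"
    have "L - e - ln w \<le> f w \<and> f w \<le> L + e - ln w" if "0 < w" "w \<le> z" for w
      using near_0[of w] that z by (auto simp: dist_real_def)
    moreover have "ln z \<le> L - e" using near_0[of z] z by auto
    ultimately have "powr_ln_primitive m (L + - e) z
        \<le> enn2real (\<integral>\<^sup>+ w. ennreal (indicator {0<..z} w * w powr (m - 1) * f w) \<partial>lborel)"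
      "enn2real (\<integral>\<^sup>+ w. ennreal (indicator {0<..z} w * w powr (m - 1) * f w) \<partial>lborel)
        \<le> powr_ln_primitive m (L + e) z"
      using nn_integral_powr_mult_bounds[of m z "L - e" f "L + e"] assms(1) z by auto
    moreover have "e * z powr m / m = c * norm (z powr m)" using assms(1) by (simp add: e_def)
    ultimately show "norm (enn2real (\<integral>\<^sup>+ w. ennreal (indicator {0<..z} w * w powr (m - 1) * f w) \<partial>lborel)
      - powr_ln_primitive m L z) \<le> c * norm (z powr m)"
      unfolding powr_ln_primitive_shift by auto
  qed
qed

definition std_gamma_density :: "real \<Rightarrow> real \<Rightarrow> real" where
  "std_gamma_density k y = (if 0 < y then y powr (k - 1) * exp (- y) / Gamma k else 0)"

lemma gamma_unit_density_measurable [measurable]: "gamma_unit_density k \<in> borel_measurable borel"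
  unfolding gamma_unit_density_def by measurable

lemma gamma_unit_density_scale:
  assumes "0 < k"
  shows "gamma_unit_density k (y / k) = k * std_gamma_density k y"
proof (cases "0 < y")
  case True
  have "(y / k) powr (k - 1) = y powr (k - 1) / k powr (k - 1)"
    using True assms by (simp add: powr_divide)
  moreover have "k powr k = k * k powr (k - 1)"
    using assms by (simp add: powr_diff)
  ultimately show ?thesis
    using True assms by (simp add: gamma_unit_density_def std_gamma_density_def field_simps)
next
  case False
  thus ?thesis
    using assms by (simp add: gamma_unit_density_def std_gamma_density_def zero_less_divide_iff)
qed

lemma std_gamma_density_mult_divide:
  assumes "0 < u" "0 < w"
  shows "std_gamma_density k u * std_gamma_density m (w / u) / u
      = w powr (m - 1) / (Gamma k * Gamma m) * (u powr (k - m) * exp (- u - w / u) / u)"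
proof -
  have "(w / u) powr (m - 1) = w powr (m - 1) / u powr (m - 1)"
    using assms by (simp add: powr_divide)
  moreover have "u powr (k - 1) / u powr (m - 1) = u powr (k - m)"
    using assms by (simp add: powr_diff[symmetric])
  moreover have "exp (- u - w / u) = exp (- u) * exp (- (w / u))"
    by (simp add: exp_diff exp_minus field_simps)
  ultimately show ?thesis
    using assms by (simp add: std_gamma_density_def field_simps)
qed

lemma sets_lborel_pair_mult_le [measurable]:
  fixes g x :: real
  shows "{(s, t). g * s * t \<le> x} \<in> sets (lborel \<Otimes>\<^sub>M lborel)"
proof -
  have "{(s, t). g * s * t \<le> x} = {p \<in> space (lborel \<Otimes>\<^sub>M lborel). g * fst p * snd p \<le> x}"
    by (auto simp: space_pair_measure)
  also have "\<dots> \<in> sets (lborel \<Otimes>\<^sub>M lborel)" by measurable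
  finally show ?thesis .
qed

lemma genK_cdf_eq_iterated:
  "genK_cdf k m g x = enn2real (\<integral>\<^sup>+ s. \<integral>\<^sup>+ t. ennreal (gamma_unit_density k s * gamma_unit_density m t)
      * indicator {(s, t). g * s * t \<le> x} (s, t) \<partial>lborel \<partial>lborel)"
  unfolding genK_cdf_def gamma_pair_measure_def measure_def
  by (subst emeasure_density, measurable, subst lborel.nn_integral_fst[symmetric], measurable)

lemma genK_inner_substitution:
  assumes "0 < k" "0 < m" "0 < g"
  defines "c \<equiv> ennreal (1 / (Gamma k * Gamma m))"
  shows "ennreal (1 / k) * (\<integral>\<^sup>+ t. ennreal (gamma_unit_density k (u / k) * gamma_unit_density m t)
        * indicator {(s, t). g * s * t \<le> x} (u / k, t) \<partial>lborel)
    = (\<integral>\<^sup>+ w. c * (ennreal (indicator {0<..k * m * x / g} w * w powr (m - 1))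
        * ennreal (indicator {0<..} u * (u powr (k - m) * exp (- u - w / u) / u))) \<partial>lborel)"
proof (cases "0 < u")
  case False
  hence "gamma_unit_density k (u / k) = 0"
    using assms(1) by (simp add: gamma_unit_density_def zero_less_divide_iff)
  thus ?thesis using False by simp
next
  case True
  define f where "f t = ennreal (gamma_unit_density k (u / k) * gamma_unit_density m t)
      * indicator {(s, t). g * s * t \<le> x} (u / k, t)" for t
  have [measurable]: "f \<in> borel_measurable borel" unfolding f_def by measurable
  have "ennreal (1 / k) * integral\<^sup>N lborel f
      = ennreal (1 / k) * (ennreal (1 / (m * u)) * (\<integral>\<^sup>+ w. f (0 + 1 / (m * u) * w) \<partial>lborel))"
    using nn_integral_real_affine[of f "1 / (m * u)" 0] assms True by simp
  also have "\<dots> = (\<integral>\<^sup>+ w. ennreal (1 / k) * (ennreal (1 / (m * u)) * f (w / (m * u))) \<partial>lborel)"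
    by (simp add: nn_integral_cmult)
  also have "\<dots> = (\<integral>\<^sup>+ w. c * (ennreal (indicator {0<..k * m * x / g} w * w powr (m - 1))
        * ennreal (indicator {0<..} u * (u powr (k - m) * exp (- u - w / u) / u))) \<partial>lborel)"
  proof (rule nn_integral_cong)
    fix w :: real
    have "(u / k, w / (m * u)) \<in> {(s, t). g * s * t \<le> x} \<longleftrightarrow> w \<le> k * m * x / g"
      using assms True by (simp add: field_simps)
    moreover have "gamma_unit_density m (w / (m * u)) = m * std_gamma_density m (w / u)"
      using gamma_unit_density_scale[OF assms(2), of "w / u"] by (simp add: field_simps)
    moreover have "std_gamma_density m (w / u) = 0" if "w \<le> 0"
      using that True by (simp add: std_gamma_density_def zero_less_divide_iff)
    ultimately show "ennreal (1 / k) * (ennreal (1 / (m * u)) * f (w / (m * u)))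
      = c * (ennreal (indicator {0<..k * m * x / g} w * w powr (m - 1))
        * ennreal (indicator {0<..} u * (u powr (k - m) * exp (- u - w / u) / u)))"
      using assms True std_gamma_density_mult_divide[OF True, of w k m]
        gamma_unit_density_scale[OF assms(1), of u]
      by (auto simp: f_def c_def indicator_def ennreal_mult[symmetric] field_simps not_less)
  qed
  finally show ?thesis unfolding f_def .
qed

lemma genK_cdf_eq_nn_integral:
  assumes "0 < k" "0 < m" "0 < g"
  shows "genK_cdf k m g x
    = enn2real (\<integral>\<^sup>+ w. ennreal (indicator {0<..k * m * x / g} w * w powr (m - 1))
        * (\<integral>\<^sup>+ u. ennreal (indicator {0<..} u * (u powr (k - m) * exp (- u - w / u) / u)) \<partial>lborel)
        \<partial>lborel) / (Gamma k * Gamma m)"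
proof -
  define I where "I s = (\<integral>\<^sup>+ t. ennreal (gamma_unit_density k s * gamma_unit_density m t)
      * indicator {(s, t). g * s * t \<le> x} (s, t) \<partial>lborel)" for s
  define a where "a w = ennreal (indicator {0<..k * m * x / g} w * w powr (m - 1))" for w :: real
  define b where "b w u = ennreal (indicator {0<..} u * (u powr (k - m) * exp (- u - w / u) / u))"
    for w u :: real
  define c where "c = ennreal (1 / (Gamma k * Gamma m))"
  have [measurable]: "I \<in> borel_measurable borel" unfolding I_def by measurable
  have [measurable]: "(\<lambda>(u, w). c * (a w * b w u)) \<in> borel_measurable (lborel \<Otimes>\<^sub>M lborel)"
    unfolding a_def b_def by measurable
  have "integral\<^sup>N lborel I = (\<integral>\<^sup>+ u. ennreal (1 / k) * I (u / k) \<partial>lborel)"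
    using nn_integral_real_affine[of I "1 / k" 0] assms(1) by (simp add: nn_integral_cmult)
  also have "\<dots> = (\<integral>\<^sup>+ u. \<integral>\<^sup>+ w. c * (a w * b w u) \<partial>lborel \<partial>lborel)"
    unfolding I_def a_def b_def c_def using genK_inner_substitution[OF assms] by simp
  also have "\<dots> = (\<integral>\<^sup>+ w. \<integral>\<^sup>+ u. c * (a w * b w u) \<partial>lborel \<partial>lborel)"
    by (rule lborel_pair.Fubini'[symmetric]) measurable
  also have "\<dots> = (\<integral>\<^sup>+ w. c * (a w * (\<integral>\<^sup>+ u. b w u \<partial>lborel)) \<partial>lborel)"
    by (intro nn_integral_cong) (simp add: nn_integral_cmult b_def mult.assoc)
  also have "\<dots> = c * (\<integral>\<^sup>+ w. a w * (\<integral>\<^sup>+ u. b w u \<partial>lborel) \<partial>lborel)"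
    by (rule nn_integral_cmult) (unfold a_def b_def, measurable)
  finally have "genK_cdf k m g x = enn2real (c * (\<integral>\<^sup>+ w. a w * (\<integral>\<^sup>+ u. b w u \<partial>lborel) \<partial>lborel))"
    unfolding genK_cdf_eq_iterated I_def by simp
  thus ?thesis
    using Gamma_real_pos[OF assms(1)] Gamma_real_pos[OF assms(2)]
    by (simp add: a_def b_def c_def enn2real_mult)
qed

lemma genK_cdf_same_shape_eq:
  assumes "0 < m" "0 < g" "m\<^sup>2 * x / g \<le> 1"
  shows "genK_cdf m m g x = enn2real (\<integral>\<^sup>+ w. ennreal (indicator {0<..m\<^sup>2 * x / g} w * w powr (m - 1)
      * bessel_kernel w) \<partial>lborel) / (Gamma m)\<^sup>2"
proof -
  have "ennreal (indicator {0<..m\<^sup>2 * x / g} w * w powr (m - 1))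
      * (\<integral>\<^sup>+ u. ennreal (indicator {0<..} u * (u powr (m - m) * exp (- u - w / u) / u)) \<partial>lborel)
    = ennreal (indicator {0<..m\<^sup>2 * x / g} w * w powr (m - 1) * bessel_kernel w)" for w
  proof (cases "w \<in> {0<..m\<^sup>2 * x / g}")
    case True
    have "(\<integral>\<^sup>+ u. ennreal (indicator {0<..} u * (u powr (m - m) * exp (- u - w / u) / u)) \<partial>lborel)
        = (\<integral>\<^sup>+ u. ennreal (indicator {0<..} u * (exp (- u - w / u) / u)) \<partial>lborel)"
      by (intro nn_integral_cong) (simp add: indicator_def)
    also have "\<dots> = ennreal (bessel_kernel w)"
      using True assms(3) by (intro nn_integral_bessel_kernel) auto
    finally show ?thesis using True by (simp add: ennreal_mult')
  qed simp
  thus ?thesis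
    using genK_cdf_eq_nn_integral[OF assms(1,1,2), of x] by (simp add: power2_eq_square)
qed

lemma genK_leading_term_eq:
  assumes "0 < m" "0 < x" "0 < g"
  shows "(Digamma (m + 1) + 2 * Digamma 1 - Digamma m - ln (m\<^sup>2 * x / g))
      / (m powr (- 2 * m + 1) * (Gamma m)\<^sup>2 * x powr (- m) * g powr m)
    = powr_ln_primitive m (2 * Digamma 1) (m\<^sup>2 * x / g) / (Gamma m)\<^sup>2"
proof -
  define z where "z = m\<^sup>2 * x / g"
  have "(m\<^sup>2) powr m = (m powr 2) powr m" using assms(1) by (simp add: powr_numeral)
  also have "\<dots> = m powr (2 * m)" by (simp add: powr_powr)
  finally have z_powr: "z powr m = m powr (2 * m) * x powr m / g powr m"
    using assms by (simp add: z_def powr_divide powr_mult)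
  have m_powr: "m powr (- 2 * m + 1) = m powr 1 / m powr (2 * m)"
    by (subst powr_diff[symmetric]) (simp add: algebra_simps)
  have x_powr: "x powr (- m) = 1 / x powr m"
    by (simp add: powr_minus divide_inverse)
  have denominator:
    "m powr (- 2 * m + 1) * (Gamma m)\<^sup>2 * x powr (- m) * g powr m = m * (Gamma m)\<^sup>2 / z powr m"
    unfolding z_powr m_powr x_powr using assms by (simp add: field_simps)
  have digamma: "Digamma (m + 1) = Digamma m + 1 / m"
    using Digamma_plus1[of m] assms(1) by simp
  have "0 < z powr m" "0 < Gamma m"
    using assms by (auto simp: z_def Gamma_real_pos)
  thus ?thesis
    unfolding z_def[symmetric] denominator digamma using assms(1)
    by (simp add: powr_ln_primitive_def field_simps power2_eq_square)
qed

lemma genK_cdf_minus_leading_term_eq: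
  assumes "0 < m" "0 < x" "m\<^sup>2 * x \<le> g"
  shows "genK_cdf m m g x - (Digamma (m + 1) + 2 * Digamma 1 - Digamma m - ln (m\<^sup>2 * x / g))
      / (m powr (- 2 * m + 1) * (Gamma m)\<^sup>2 * x powr (- m) * g powr m)
    = (enn2real (\<integral>\<^sup>+ w. ennreal (indicator {0<..m\<^sup>2 * x / g} w * w powr (m - 1)
        * bessel_kernel w) \<partial>lborel) - powr_ln_primitive m (2 * Digamma 1) (m\<^sup>2 * x / g))
      / (Gamma m)\<^sup>2"
proof -
  have "0 < m\<^sup>2 * x" using assms by simp
  hence "0 < g" "m\<^sup>2 * x / g \<le> 1" using assms(3) by auto
  thus ?thesis
    unfolding genK_cdf_same_shape_eq[OF assms(1) \<open>0 < g\<close> \<open>m\<^sup>2 * x / g \<le> 1\<close>]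
      genK_leading_term_eq[OF assms(1,2) \<open>0 < g\<close>]
    by (simp only: diff_divide_distrib)
qed

theorem proposition4p1:
  fixes m x :: real
  assumes "m > 0" and "x > 0"
  shows "(\<lambda>g. genK_cdf m m g x
           - (Digamma (m + 1) + 2 * Digamma 1 - Digamma m - ln (m\<^sup>2 * x / g))
             / (m powr (- 2 * m + 1) * (Gamma m)\<^sup>2 * x powr (- m) * g powr m))
         \<in> o[at_top](\<lambda>g. g powr (- m))"
proof -
  define I where "I z = enn2real (\<integral>\<^sup>+ w. ennreal (indicator {0<..z} w * w powr (m - 1)
      * bessel_kernel w) \<partial>lborel)" for z
  define P where "P = powr_ln_primitive m (2 * Digamma 1)"
  have "(\<lambda>z. I z - P z) \<in> o[at_right 0](\<lambda>z. z powr m)"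
    unfolding I_def P_def
    using nn_integral_powr_mult_asymptotic[OF assms(1) tendsto_bessel_kernel_plus_ln] .
  moreover have "filterlim (\<lambda>g. m\<^sup>2 * x / g) (at_right 0) at_top"
    using assms by real_asymp
  ultimately have "(\<lambda>g. I (m\<^sup>2 * x / g) - P (m\<^sup>2 * x / g)) \<in> o[at_top](\<lambda>g. (m\<^sup>2 * x / g) powr m)"
    by (rule landau_o.small.compose)
  also have "(\<lambda>g. (m\<^sup>2 * x / g) powr m) \<in> \<Theta>[at_top](\<lambda>g. g powr (- m))"
    using assms by real_asymp
  finally have "(\<lambda>g. (I (m\<^sup>2 * x / g) - P (m\<^sup>2 * x / g)) / (Gamma m)\<^sup>2) \<in> o[at_top](\<lambda>g. g powr (- m))"
    using Gamma_real_pos[OF assms(1)] by simp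
  moreover have "eventually (\<lambda>g. (I (m\<^sup>2 * x / g) - P (m\<^sup>2 * x / g)) / (Gamma m)\<^sup>2
      = genK_cdf m m g x - (Digamma (m + 1) + 2 * Digamma 1 - Digamma m - ln (m\<^sup>2 * x / g))
             / (m powr (- 2 * m + 1) * (Gamma m)\<^sup>2 * x powr (- m) * g powr m)) at_top"
    using eventually_ge_at_top[of "m\<^sup>2 * x"]
    by eventually_elim (simp only: I_def P_def genK_cdf_minus_leading_term_eq[OF assms(1,2)])
  ultimately show ?thesis by (rule landau_o.small.in_cong[THEN iffD1, rotated])
qed

end
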